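(* Let $B(z)=\frac{1-\sqrt{1-4z}}{2z}=\sum_{n\ge0}\frac{1}{n+1}\binom{2n}{n}z^n$ be the generating function of binary trees counted by the number of inner nodes. Then \[ B(z)=1+\frac{z}{1-2z}\,B\Big(\frac{z^2}{(1-2z)^2}\Big). \]
   Context: A binary tree is either a leaf $\square$ or a root (an inner node) together with an ordered pair (left, right) of subtrees which are binary trees. The size of a binary tree is its number of inner nodes. *)

theory Defs
  imports "HOL-Computational_Algebra.Formal_Power_Series"
begin

definition B :: "real fps" where
  "B = Abs_fps (\<lambda>n. real (2 * n choose n) / real (n + 1))"

end

theory Submission
  imports Defs
begin

text \<open>\<open>B\<close> is the unique power series solution of \<open>F = 1 + z F\<^sup>2\<close>: writing
  \<open>\<surd>(1 - 4z)\<close> as the binomial series of exponent \<open>1/2\<close>, one has \<open>1 - \<surd>(1 - 4z) = 2 z B\<close>, and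
  squaring gives the equation. The series \<open>u = z / (1 - 2z)\<close> satisfies \<open>u = z + 2 z u\<close>, and with
  this a direct computation shows that \<open>1 + u B(u\<^sup>2)\<close> solves the same quadratic equation,
  so it equals \<open>B\<close>.\<close>

unbundle fps_syntax

lemma central_binomial_Suc:
  "Suc k * (2 * Suc k choose Suc k) = 2 * (2 * k + 1) * (2 * k choose k)"
proof -
  have "Suc k * (2 * Suc k choose Suc k) = 2 * Suc k * (Suc (2 * k) choose k)"
    using Suc_times_binomial[of k "Suc (2 * k)"] by simp
  moreover have "Suc (2 * k) choose k = Suc (2 * k) choose Suc k"
    using central_binomial_odd[of "Suc (2 * k)"] by simp
  moreover have "Suc k * (Suc (2 * k) choose Suc k) = Suc (2 * k) * (2 * k choose k)"
    by (rule Suc_times_binomial)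
  ultimately show ?thesis
    by (metis mult.assoc mult.left_commute add.commute plus_1_eq_Suc)
qed

lemma gbinomial_Suc_eq:
  fixes a :: "'a::field_char_0"
  shows "a gchoose Suc k = (a gchoose k) * (a - of_nat k) / of_nat (Suc k)"
proof -
  have "of_nat (Suc k) * (a gchoose Suc k) = (a - of_nat k) * (a gchoose k)"
    using gbinomial_absorption[of k a] gbinomial_absorb_comp[of a k] by simp
  then show ?thesis
    by (simp add: field_simps del: of_nat_Suc)
qed

lemma half_gchoose_Suc:
  "((1/2 :: real) gchoose Suc k) * (-4) ^ Suc k = - 2 * real (2 * k choose k) / (k + 1)"
proof (induction k)
  case 0
  show ?case by simp
next
  case (Suc k)
  define c where "c = real (2 * k choose k)"
  define e where "e = real (2 * Suc k choose Suc k)"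
  have e: "e * (real k + 1) = 2 * (2 * real k + 1) * c"
  proof -
    have "real (Suc k * (2 * Suc k choose Suc k)) = real (2 * (2 * k + 1) * (2 * k choose k))"
      by (simp only: central_binomial_Suc)
    then show ?thesis
      unfolding c_def e_def
      by (simp only: of_nat_mult of_nat_Suc of_nat_add of_nat_numeral of_nat_1 ac_simps)
  qed
  have "((1/2 :: real) gchoose Suc (Suc k)) * (-4) ^ Suc (Suc k)
      = ((1/2 :: real) gchoose Suc k) * (-4) ^ Suc k * (2 * (2 * real k + 1) / (real k + 2))"
    by (subst gbinomial_Suc_eq) (simp add: field_simps)
  also have "\<dots> = - 2 * (e * (real k + 1)) / ((real k + 1) * (real k + 2))"
    unfolding Suc e c_def[symmetric] times_divide_times_eq by (simp add: algebra_simps)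
  also have "\<dots> = - 2 * e / (Suc k + 1)"
    by simp
  finally show ?case
    unfolding e_def .
qed

lemma fps_binomial_half_squared: "fps_binomial (1/2 :: 'a::field_char_0) ^ 2 = 1 + fps_X"
  by (simp add: fps_binomial_power fps_binomial_1)

lemma catalan_equation_unique:
  fixes F G :: "'a::comm_ring_1 fps"
  assumes F: "F = 1 + fps_X * F ^ 2" and G: "G = 1 + fps_X * G ^ 2"
  shows "F = G"
proof -
  have nth_Suc: "H $ Suc m = (\<Sum>i=0..m. H $ i * H $ (m - i))"
    if "H = 1 + fps_X * H ^ 2" for H :: "'a fps" and m
  proof -
    have "H $ Suc m = (H ^ 2) $ m"
      by (subst that) simp
    then show ?thesis
      by (simp add: power2_eq_square fps_mult_nth)
  qed
  have "F $ n = G $ n" for n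
  proof (induction n rule: less_induct)
    case (less n)
    show ?case
    proof (cases n)
      case 0
      then show ?thesis
        by (subst F, subst G) simp
    next
      case (Suc m)
      then show ?thesis
        using less by (simp add: nth_Suc[OF F] nth_Suc[OF G])
    qed
  qed
  then show ?thesis
    by (simp add: fps_eq_iff)
qed

lemma catalan_equation_substitution:
  fixes F u :: "'a::idom fps"
  assumes F: "F = 1 + fps_X * F ^ 2" and u: "u = fps_X + 2 * fps_X * u"
  defines "C \<equiv> 1 + u * (F oo u ^ 2)"
  shows "C = 1 + fps_X * C ^ 2"
proof -
  define D where "D = F oo u ^ 2"
  have "u $ 0 = 0"
    by (subst u) simp
  then have D: "u ^ 2 * D ^ 2 = D - 1"
    unfolding D_def
    by (subst (2) F) (simp add: fps_compose_add_distrib fps_compose_mult_distrib fps_compose_power)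
  have "fps_X * C ^ 2 = fps_X * (1 + 2 * u * D + u ^ 2 * D ^ 2)"
    by (simp add: C_def D_def power2_eq_square algebra_simps)
  also have "\<dots> = (fps_X + 2 * fps_X * u) * D"
    unfolding D by (simp add: algebra_simps)
  also have "\<dots> = C - 1"
    by (simp add: C_def D_def flip: u)
  finally show ?thesis
    by simp
qed

lemma one_minus_sqrt_one_minus_4X:
  "1 - (fps_binomial (1/2) oo (fps_const (-4) * fps_X)) = 2 * fps_X * B"
proof (rule fps_ext)
  fix n
  show "(1 - (fps_binomial (1/2) oo (fps_const (-4) * fps_X))) $ n = (2 * fps_X * B) $ n"
  proof (cases n)
    case (Suc k)
    then show ?thesis
      using half_gchoose_Suc[of k]
      by (simp add: B_def fps_numeral_fps_const mult.assoc) (simp add: mult_ac)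
  qed simp
qed

lemma B_quadratic_equation: "B = 1 + fps_X * B ^ 2"
proof -
  define S :: "real fps" where "S = fps_binomial (1/2) oo (fps_const (-4) * fps_X)"
  have S_squared: "S ^ 2 = 1 - 4 * fps_X"
  proof -
    have "S ^ 2 = (1 + fps_X) oo (fps_const (-4) * fps_X)"
      unfolding S_def by (simp add: fps_compose_power fps_binomial_half_squared)
    also have "\<dots> = 1 - 4 * fps_X"
      by (simp add: fps_compose_add_distrib fps_numeral_fps_const) (simp add: fps_eq_iff)
    finally show ?thesis .
  qed
  have S: "1 - S = 2 * fps_X * B"
    unfolding S_def by (rule one_minus_sqrt_one_minus_4X)
  have "fps_X * (4 * (fps_X * B ^ 2)) = (1 - S) ^ 2"
    unfolding S by (simp add: power2_eq_square algebra_simps)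
  also have "\<dots> = 1 - 2 * S + S ^ 2"
    by (simp add: power2_eq_square algebra_simps)
  also have "\<dots> = 2 * (1 - S) - 4 * fps_X"
    unfolding S_squared by (simp add: algebra_simps)
  also have "\<dots> = fps_X * (4 * (B - 1))"
    unfolding S by (simp add: algebra_simps)
  finally have "4 * (fps_X * B ^ 2) = 4 * (B - 1)"
    by (simp only: mult_cancel_left fps_X_neq_zero simp_thms)
  then show ?thesis
    by (simp only: mult_cancel_left) simp
qed

theorem proposition1:
  shows "B = 1 + (fps_X / (1 - 2 * fps_X)) * (B oo (fps_X ^ 2 / (1 - 2 * fps_X) ^ 2))"
proof -
  define u :: "real fps" where "u = fps_X / (1 - 2 * fps_X)"
  have unit: "(1 - 2 * fps_X :: real fps) $ 0 \<noteq> 0"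
    by simp
  have "u = fps_X + 2 * fps_X * u"
  proof -
    have "(1 - 2 * fps_X) * u = fps_X"
      using unit unfolding u_def by (simp add: fps_divide_unit inverse_mult_eq_1' mult.left_commute)
    then show ?thesis
      by (simp add: algebra_simps)
  qed
  moreover have "fps_X ^ 2 / (1 - 2 * fps_X) ^ 2 = u ^ 2"
    using unit unfolding u_def by (simp add: fps_divide_unit power_mult_distrib fps_inverse_power)
  ultimately show ?thesis
    using catalan_equation_unique[OF B_quadratic_equation
        catalan_equation_substitution[OF B_quadratic_equation]]
    unfolding u_def by simp
qed

end
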